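(* Let $x,k,r$ be positive integers with $x>1$, and let $p$ be a prime, such that $x^3 + (x+1)^3 + \cdots + (x+k-1)^3 = p^{2r}$. If $k$ is even, then $2x+k-1 = p^t$ for some integer $t$ with $0<t<2r$. If $k$ is odd, then $2x+k-1 = 2p^t$ for some integer $t$ with $0<t<2r$. *)

theory Defs
  imports "HOL-Computational_Algebra.Primes"
begin

end

theory Submission
  imports Defs
begin

(* With N = 2x + k - 1, a sum S of k consecutive cubes starting at x satisfies
   8 S = k N (N^2 + k^2 - 1), and for odd k = 2b + 1 this becomes S = k M (M^2 + b(b + 1))
   with M = x + b = N / 2.  So if S is a power of p, then N (odd when k is even, hence coprime
   to 8) respectively M divides that power; since the cofactor grows at least like N^2,
   it is a proper nontrivial divisor, i.e. p^t with 0 < t < 2r. *)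

lemma sum_cubes_consecutive:
  fixes x j :: nat
  shows "8 * (\<Sum>i<Suc j. (x + i) ^ 3) = Suc j * (2 * x + j) * ((2 * x + j)\<^sup>2 + j * (j + 2))"
proof (induction j)
  case 0
  then show ?case by (simp add: power3_eq_cube power2_eq_square)
next
  case (Suc j)
  have "8 * (\<Sum>i<Suc (Suc j). (x + i) ^ 3) = 8 * (\<Sum>i<Suc j. (x + i) ^ 3) + 8 * (x + Suc j) ^ 3"
    by simp
  also have "\<dots> = Suc j * (2 * x + j) * ((2 * x + j)\<^sup>2 + j * (j + 2)) + 8 * (x + Suc j) ^ 3"
    using Suc by simp
  also have "\<dots> = Suc (Suc j) * (2 * x + Suc j) * ((2 * x + Suc j)\<^sup>2 + Suc j * (Suc j + 2))"
    by (simp add: power3_eq_cube power2_eq_square algebra_simps)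
  finally show ?case .
qed

lemma sum_cubes_odd_length:
  fixes x b :: nat
  shows "(\<Sum>i<Suc (2 * b). (x + i) ^ 3) = Suc (2 * b) * (x + b) * ((x + b)\<^sup>2 + b * (b + 1))"
proof -
  have "8 * (\<Sum>i<Suc (2 * b). (x + i) ^ 3) = Suc (2 * b) * (2 * (x + b)) * ((2 * (x + b))\<^sup>2 + 2 * b * (2 * b + 2))"
    using sum_cubes_consecutive[of x "2 * b"] by (simp add: algebra_simps)
  also have "\<dots> = 8 * (Suc (2 * b) * (x + b) * ((x + b)\<^sup>2 + b * (b + 1)))"
    by (simp add: power2_eq_square algebra_simps)
  finally show ?thesis by simp
qed

lemma proper_divisor_of_prime_power:
  fixes p m n :: nat
  assumes "prime p" and "m dvd p ^ n" and "1 < m" and "m < p ^ n"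
  shows "\<exists>t. 0 < t \<and> t < n \<and> m = p ^ t"
proof -
  obtain t where "t \<le> n" and m: "m = p ^ t"
    using assms(1,2) divides_primepow_nat by blast
  have "t \<noteq> 0" using m assms(3) by (metis less_irrefl power_0)
  moreover have "t < n"
    using m assms(4) power_less_imp_less_exp prime_gt_1_nat[OF assms(1)] by blast
  ultimately show ?thesis using m by blast
qed

lemma even_number_of_cubes_prime_power:
  fixes x b n p :: nat
  assumes "prime p" and "0 < x" and "0 < b" and "(\<Sum>i<2 * b. (x + i) ^ 3) = p ^ n"
  shows "\<exists>t. 0 < t \<and> t < n \<and> 2 * x + 2 * b - 1 = p ^ t"
proof -
  obtain j where j: "2 * b = Suc j" using assms(3) by (cases "2 * b") auto
  define N where "N = 2 * x + j"
  have N_eq: "2 * x + 2 * b - 1 = N" using j N_def by simp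
  have identity: "2 * b * N * (N\<^sup>2 + j * (j + 2)) = 8 * p ^ n"
    using sum_cubes_consecutive[of x j] assms(4) j by (simp add: N_def)
  have "odd j" using j by presburger
  then have "odd N" by (simp add: N_def)
  have N3: "N \<ge> 3" using assms(2) \<open>odd j\<close> N_def by (cases j) auto
  have "coprime N 8"
    using \<open>odd N\<close> coprime_power_right_iff[of N 2 3] by simp
  moreover have "N dvd 8 * p ^ n"
    using identity by (metis dvd_mult dvd_mult2 dvd_refl)
  ultimately have "N dvd p ^ n" using coprime_dvd_mult_right_iff by blast
  have "2 * N * N\<^sup>2 \<le> 2 * b * N * (N\<^sup>2 + j * (j + 2))"
    using assms(3) by (intro mult_mono) auto
  then have "2 * (N * N\<^sup>2) \<le> 8 * p ^ n" unfolding identity by (simp only: mult.assoc)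
  then have "N * N\<^sup>2 \<le> 4 * p ^ n" by linarith
  moreover have "9 * N \<le> N * N\<^sup>2"
    using N3 power_mono[of 3 N 2] by simp
  ultimately have "N < p ^ n" using N3 by linarith
  then show ?thesis
    using proper_divisor_of_prime_power[OF assms(1) \<open>N dvd p ^ n\<close>] N3 N_eq by simp
qed

lemma odd_number_of_cubes_prime_power:
  fixes x b n p :: nat
  assumes "prime p" and "1 < x" and "(\<Sum>i<Suc (2 * b). (x + i) ^ 3) = p ^ n"
  shows "\<exists>t. 0 < t \<and> t < n \<and> x + b = p ^ t"
proof -
  define M where "M = x + b"
  have identity: "Suc (2 * b) * M * (M\<^sup>2 + b * (b + 1)) = p ^ n"
    using sum_cubes_odd_length[of x b] assms(3) by (simp add: M_def)
  have M2: "M \<ge> 2" using assms(2) M_def by simp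
  have "M dvd p ^ n" using identity by (metis dvd_mult dvd_mult2 dvd_refl)
  have "M * M\<^sup>2 \<le> Suc (2 * b) * M * (M\<^sup>2 + b * (b + 1))"
    by (intro mult_mono) auto
  moreover have "2 * M \<le> M * M\<^sup>2"
    using M2 power_mono[of 2 M 2] by simp
  ultimately have "M < p ^ n" using identity M2 by linarith
  then show ?thesis
    using proper_divisor_of_prime_power[OF assms(1) \<open>M dvd p ^ n\<close>] M2 M_def by simp
qed

theorem mainTheorem3:
  fixes x k r p :: nat
  assumes "x > 1" and "k > 0" and "r > 0" and "prime p"
    and "(\<Sum>i<k. (x + i) ^ 3) = p ^ (2 * r)"
  shows "(even k \<longrightarrow> (\<exists>t::nat. 0 < t \<and> t < 2 * r \<and> 2 * x + k - 1 = p ^ t))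
       \<and> (odd k \<longrightarrow> (\<exists>t::nat. 0 < t \<and> t < 2 * r \<and> 2 * x + k - 1 = 2 * p ^ t))"
proof (intro conjI impI)
  assume "even k"
  then obtain b where "k = 2 * b" by blast
  then show "\<exists>t. 0 < t \<and> t < 2 * r \<and> 2 * x + k - 1 = p ^ t"
    using even_number_of_cubes_prime_power[of p x b "2 * r"] assms by simp
next
  assume "odd k"
  then obtain b where k: "k = Suc (2 * b)" using oddE by fastforce
  have "2 * x + k - 1 = 2 * (x + b)" using k by simp
  moreover have "\<exists>t. 0 < t \<and> t < 2 * r \<and> x + b = p ^ t"
    using odd_number_of_cubes_prime_power[of p x b "2 * r"] assms k by simp
  ultimately show "\<exists>t. 0 < t \<and> t < 2 * r \<and> 2 * x + k - 1 = 2 * p ^ t"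
    by auto
qed

end
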